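(* Let $\Lambda^*$ be a factorial language in $(\mathbb F_+^d)^N$ and fix $\emptyset\ne F\subseteq[N]$, with $F^c=[N]\setminus F$. The following are equivalent: (i) there exists $a\in\bigcap_{i\in F}\ker\phi_{\mathbf i}$ with $aQ_{F^c}\ne0$; (ii) there exists $a\in A$ with $aQ_{F^c}=Q_{\underline\emptyset}$; (iii) for every $\delta_i(k)\in\Lambda^*$ with $(i,k)\in F\times[d]$ there exists $\underline\mu\in\Lambda^*$ with $\underline\mu*\delta_i(k)\notin\Lambda^*$. If $F=[N]$, then (iii) is moreover equivalent to each of: (iv) $\bigcap_{i\in[N]}\ker\phi_{\mathbf i}=\mathbb CQ_{\underline\emptyset}$; (v) $\bigcap_{i\in[N]}\ker\phi_{\mathbf i}\ne(0)$; (vi) $Q_{\underline\emptyset}\in A$.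
   Context: $\mathbb F_+^d$ is the free semigroup on letters $[d]$ with empty word $\emptyset$. In $(\mathbb F_+^d)^N$: $\underline\mu*\underline\nu=(\mu_1\nu_1,\dots,\mu_N\nu_N)$; $|\underline\mu|=(|\mu_1|,\dots,|\mu_N|)$; $\delta_i(k)$ has the letter $k$ in coordinate $i$ and $\emptyset$ elsewhere; $\underline\emptyset=(\emptyset,\dots,\emptyset)$. A factorial language $\Lambda^*\subseteq(\mathbb F_+^d)^N$: for every $i\in[N]$ some $\delta_i(k)\in\Lambda^*$, and $\Lambda^*$ is closed under subwords. On $\ell^2(\Lambda^* )$ with basis $\{e_{\underline w}\}$, $T_{\underline\mu}e_{\underline w}=e_{\underline\mu*\underline w}$ if $\underline\mu*\underline w\in\Lambda^*$, $0$ otherwise. $A=C^*(T_{\underline\mu}^*T_{\underline\mu}:\underline\mu\in\Lambda^* )$. For $i\in[N]$, $P_{\mathbf i}=\sum_{k\in[d]}T_{\delta_i(k)}T_{\delta_i(k)}^*$; for $G\subseteq[N]$, $Q_G=\prod_{i\in G}(I-P_{\mathbf i})$ (with $Q_\emptyset=I$ for the empty set $G$). $Q_{\underline\emptyset}$ denotes the rank-one projection onto $\mathbb Ce_{\underline\emptyset}$ (it equals $Q_{[N]}$). $X_{\mathbf i}(\Lambda^* )=\overline{\operatorname{span}}\{T_{\delta_i(k)}a:a\in A,\ \delta_i(k)\in\Lambda^*\}$ and $\ker\phi_{\mathbf i}=\{a\in A:a\xi=0\ \forall\xi\in X_{\mathbf i}(\Lambda^* )\}$. *)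

theory Defs
  imports "HOL-Analysis.Analysis" "HOL-Library.Function_Algebras" "HOL-Library.Sublist"
begin

(* An N-tuple of words over the letters [d] = {1..d}, coordinates indexed by [N] = {1..N};
   coordinates outside [N] are required (by the language predicate) to be empty. *)
type_synonym tup = "nat \<Rightarrow> nat list"
type_synonym vec = "tup \<Rightarrow> complex"
type_synonym op = "vec \<Rightarrow> vec"

definition tcat :: "tup \<Rightarrow> tup \<Rightarrow> tup" (infixl "\<star>" 70) where
  "\<mu> \<star> \<nu> = (\<lambda>i. \<mu> i @ \<nu> i)"

definition delta :: "nat \<Rightarrow> nat \<Rightarrow> tup" where
  "delta i k = (\<lambda>j. if j = i then [k] else [])"

definition tempty :: tup where
  "tempty = (\<lambda>j. [])"

definition factorial_language :: "nat \<Rightarrow> nat \<Rightarrow> tup set \<Rightarrow> bool" where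
  "factorial_language d N L \<longleftrightarrow>
     (\<forall>w\<in>L. \<forall>i. (i \<notin> {1..N} \<longrightarrow> w i = []) \<and> set (w i) \<subseteq> {1..d}) \<and>
     (\<forall>i\<in>{1..N}. \<exists>k\<in>{1..d}. delta i k \<in> L) \<and>
     (\<forall>\<alpha> \<nu> \<beta>. \<alpha> \<star> \<nu> \<star> \<beta> \<in> L \<longrightarrow> \<nu> \<in> L)"

definition l2 :: "tup set \<Rightarrow> vec set" where
  "l2 L = {\<xi>. (\<forall>w. w \<notin> L \<longrightarrow> \<xi> w = 0) \<and> (\<lambda>w. (cmod (\<xi> w))\<^sup>2) summable_on L}"

definition l2norm :: "tup set \<Rightarrow> vec \<Rightarrow> real" where
  "l2norm L \<xi> = sqrt (infsum (\<lambda>w. (cmod (\<xi> w))\<^sup>2) L)"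

definition l2inner :: "tup set \<Rightarrow> vec \<Rightarrow> vec \<Rightarrow> complex" where
  "l2inner L \<xi> \<eta> = infsum (\<lambda>w. cnj (\<xi> w) * \<eta> w) L"

definition vsc :: "complex \<Rightarrow> vec \<Rightarrow> vec" where
  "vsc c \<xi> = (\<lambda>w. c * \<xi> w)"

(* bounded operators on l^2(L); normalised to be 0 outside l^2(L) *)
definition Bop :: "tup set \<Rightarrow> op set" where
  "Bop L = {T. (\<forall>\<xi>. \<xi> \<notin> l2 L \<longrightarrow> T \<xi> = 0) \<and> (\<forall>\<xi>\<in>l2 L. T \<xi> \<in> l2 L) \<and>
     (\<forall>\<xi>\<in>l2 L. \<forall>\<eta>\<in>l2 L. \<forall>c. T (\<xi> + \<eta>) = T \<xi> + T \<eta> \<and> T (vsc c \<xi>) = vsc c (T \<xi>)) \<and>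
     (\<exists>C. \<forall>\<xi>\<in>l2 L. l2norm L (T \<xi>) \<le> C * l2norm L \<xi>)}"

definition opnorm :: "tup set \<Rightarrow> op \<Rightarrow> real" where
  "opnorm L T = Sup {l2norm L (T \<xi>) / l2norm L \<xi> | \<xi>. \<xi> \<in> l2 L}"

definition osc :: "complex \<Rightarrow> op \<Rightarrow> op" where
  "osc c a = (\<lambda>\<xi>. vsc c (a \<xi>))"

definition Iop :: "tup set \<Rightarrow> op" where
  "Iop L = (\<lambda>\<xi>. if \<xi> \<in> l2 L then \<xi> else 0)"

definition adj :: "tup set \<Rightarrow> op \<Rightarrow> op" where
  "adj L T = (THE S. S \<in> Bop L \<and>
      (\<forall>\<xi>\<in>l2 L. \<forall>\<eta>\<in>l2 L. l2inner L (T \<xi>) \<eta> = l2inner L \<xi> (S \<eta>)))"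

definition norm_closed :: "tup set \<Rightarrow> op set \<Rightarrow> bool" where
  "norm_closed L S \<longleftrightarrow> (\<forall>f b. (\<forall>n. f n \<in> S) \<longrightarrow> b \<in> Bop L \<longrightarrow>
      (\<lambda>n. opnorm L (f n - b)) \<longlonglongrightarrow> 0 \<longrightarrow> b \<in> S)"

definition cstar :: "tup set \<Rightarrow> op set \<Rightarrow> op set" where
  "cstar L G = \<Inter>{S. G \<subseteq> S \<and> S \<subseteq> Bop L \<and>
      (\<forall>a\<in>S. \<forall>b\<in>S. a + b \<in> S \<and> a \<circ> b \<in> S) \<and> (\<forall>a\<in>S. \<forall>c. osc c a \<in> S) \<and>
      (\<forall>a\<in>S. adj L a \<in> S) \<and> norm_closed L S}"

definition clspan :: "tup set \<Rightarrow> op set \<Rightarrow> op set" where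
  "clspan L G = \<Inter>{S. G \<subseteq> S \<and> S \<subseteq> Bop L \<and> 0 \<in> S \<and>
      (\<forall>a\<in>S. \<forall>b\<in>S. a + b \<in> S) \<and> (\<forall>a\<in>S. \<forall>c. osc c a \<in> S) \<and> norm_closed L S}"

(* T_mu e_w = e_{mu*w} if mu*w \<in> L, else 0 *)
definition Tm :: "tup set \<Rightarrow> tup \<Rightarrow> op" where
  "Tm L \<mu> = (\<lambda>\<xi>. if \<xi> \<in> l2 L then
      (\<lambda>v. if v \<in> L \<and> (\<forall>i. prefix (\<mu> i) (v i)) then \<xi> (\<lambda>i. drop (length (\<mu> i)) (v i)) else 0)
    else 0)"

definition Aalg :: "tup set \<Rightarrow> op set" where
  "Aalg L = cstar L {adj L (Tm L \<mu>) \<circ> Tm L \<mu> | \<mu>. \<mu> \<in> L}"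

definition Pi :: "tup set \<Rightarrow> nat \<Rightarrow> nat \<Rightarrow> op" where
  "Pi L d i = (\<Sum>k\<in>{1..d}. Tm L (delta i k) \<circ> adj L (Tm L (delta i k)))"

definition QG :: "tup set \<Rightarrow> nat \<Rightarrow> nat set \<Rightarrow> op" where
  "QG L d G = foldr (\<lambda>i acc. (Iop L - Pi L d i) \<circ> acc) (sorted_list_of_set G) (Iop L)"

definition Qempty :: "tup set \<Rightarrow> op" where
  "Qempty L = (\<lambda>\<xi>. if \<xi> \<in> l2 L then (\<lambda>w. if w = tempty then \<xi> tempty else 0) else 0)"

definition Xi :: "tup set \<Rightarrow> nat \<Rightarrow> nat \<Rightarrow> op set" where
  "Xi L d i = clspan L {Tm L (delta i k) \<circ> a | k a. k \<in> {1..d} \<and> a \<in> Aalg L \<and> delta i k \<in> L}"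

definition kerphi :: "tup set \<Rightarrow> nat \<Rightarrow> nat \<Rightarrow> op set" where
  "kerphi L d i = {a \<in> Aalg L. \<forall>\<xi>\<in>Xi L d i. a \<circ> \<xi> = 0}"

end

(* Every generator T_mu^* T_mu of A is the diagonal operator whose symbol is the indicator of
   {w. mu*w in L}, and diagonality survives the C*-operations and norm limits. More precisely, if
   two words x and y have the same left extensions (mu*x in L iff mu*y in L), then every element of
   A takes the same value at x and at y. A diagonal element of A lies in ker phi_i exactly when its
   symbol vanishes on the words with nonempty i-th coordinate. As Q_{F^c} is the indicator of the
   words supported in F, for a in the kernels over F the product a Q_{F^c} is a multiple of
   Q_empty, which gives (i) => (ii). If some delta_i(k) with i in F could be appended to every word
   of L, the empty word and delta_i(k) would have the same left extensions, so no element of A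
   could separate them as (ii) requires. Conversely, if every such delta_i(k) is blocked by some mu,
   the product of the indicators of {w. mu*w in L} over these mu lies in A, in the kernels over F,
   and is 1 at the empty word. For F = [N], Q_{F^c} is the identity and (iv)-(vi) follow. *)

theory Submission
  imports Defs
begin

section \<open>Square-summable vectors on a language\<close>

lemma l2_vanishes: "\<xi> \<in> l2 L \<Longrightarrow> w \<notin> L \<Longrightarrow> \<xi> w = 0"
  by (simp add: l2_def)

lemma l2_summable: "\<xi> \<in> l2 L \<Longrightarrow> (\<lambda>w. (cmod (\<xi> w))\<^sup>2) summable_on L"
  by (simp add: l2_def)

lemma l2_zero [simp]: "0 \<in> l2 L"
  by (simp add: l2_def)

lemma l2norm_nonneg: "0 \<le> l2norm L \<xi>"
  unfolding l2norm_def by (simp add: infsum_nonneg)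

lemma norm_le_l2norm:
  assumes "\<xi> \<in> l2 L"
  shows "cmod (\<xi> w) \<le> l2norm L \<xi>"
proof (cases "w \<in> L")
  case False
  then show ?thesis using assms by (simp add: l2_vanishes l2norm_nonneg)
next
  case True
  have "(cmod (\<xi> w))\<^sup>2 = infsum (\<lambda>w. (cmod (\<xi> w))\<^sup>2) {w}"
    by simp
  also have "\<dots> \<le> infsum (\<lambda>w. (cmod (\<xi> w))\<^sup>2) L"
    by (rule infsum_mono2) (use l2_summable[OF assms] True in auto)
  finally show ?thesis
    unfolding l2norm_def by (simp add: real_le_rsqrt)
qed

lemma l2_restrict:
  assumes "\<xi> \<in> l2 L" and "A \<subseteq> L"
  shows "(\<lambda>w. (cmod (\<xi> w))\<^sup>2) summable_on A"
    and "infsum (\<lambda>w. (cmod (\<xi> w))\<^sup>2) A \<le> infsum (\<lambda>w. (cmod (\<xi> w))\<^sup>2) L"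
  using summable_on_subset_banach[OF l2_summable[OF assms(1)] assms(2)]
    infsum_mono2[OF _ l2_summable[OF assms(1)] assms(2)] by auto

lemma l2_mult:
  assumes "\<xi> \<in> l2 L" and "\<And>w. w \<in> L \<Longrightarrow> cmod (c w) \<le> C" and "0 \<le> C"
  shows "(\<lambda>w. c w * \<xi> w) \<in> l2 L" and "l2norm L (\<lambda>w. c w * \<xi> w) \<le> C * l2norm L \<xi>"
proof -
  have s: "(\<lambda>w. (cmod (\<xi> w))\<^sup>2) summable_on L"
    using assms(1) by (rule l2_summable)
  have sC: "(\<lambda>w. C\<^sup>2 * (cmod (\<xi> w))\<^sup>2) summable_on L"
    using summable_on_cmult_right[OF s] by simp
  have le: "(cmod (c w * \<xi> w))\<^sup>2 \<le> C\<^sup>2 * (cmod (\<xi> w))\<^sup>2" if "w \<in> L" for w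
    using assms(2)[OF that]
    by (simp add: norm_mult power_mult_distrib[symmetric] power_mono mult_right_mono)
  have sc: "(\<lambda>w. (cmod (c w * \<xi> w))\<^sup>2) summable_on L"
    by (rule summable_on_comparison_test[OF sC]) (use le in auto)
  show "(\<lambda>w. c w * \<xi> w) \<in> l2 L"
    using assms(1) sc by (simp add: l2_def)
  have "infsum (\<lambda>w. (cmod (c w * \<xi> w))\<^sup>2) L \<le> C\<^sup>2 * infsum (\<lambda>w. (cmod (\<xi> w))\<^sup>2) L"
    using infsum_mono[OF sc sC le] by (simp add: infsum_cmult_right s)
  then show "l2norm L (\<lambda>w. c w * \<xi> w) \<le> C * l2norm L \<xi>"
    unfolding l2norm_def using assms(3) real_sqrt_le_mono
    by (fastforce simp: real_sqrt_mult)
qed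

lemma l2_vsc:
  assumes "\<xi> \<in> l2 L"
  shows "vsc c \<xi> \<in> l2 L" and "l2norm L (vsc c \<xi>) \<le> cmod c * l2norm L \<xi>"
  using l2_mult[OF assms, of "\<lambda>_. c" "cmod c"] by (auto simp: vsc_def)

lemma l2_add:
  assumes "\<xi> \<in> l2 L" "\<eta> \<in> l2 L"
  shows "\<xi> + \<eta> \<in> l2 L" and "l2norm L (\<xi> + \<eta>) \<le> 2 * (l2norm L \<xi> + l2norm L \<eta>)"
proof -
  let ?sq = "\<lambda>\<zeta> w. (cmod (\<zeta> w))\<^sup>2"
  have s: "(\<lambda>w. 2 * ?sq \<xi> w + 2 * ?sq \<eta> w) summable_on L"
    using assms by (intro summable_on_add summable_on_cmult_right l2_summable)
  have le: "?sq (\<xi> + \<eta>) w \<le> 2 * ?sq \<xi> w + 2 * ?sq \<eta> w" for w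
  proof -
    have "?sq (\<xi> + \<eta>) w \<le> (cmod (\<xi> w) + cmod (\<eta> w))\<^sup>2"
      by (simp add: norm_triangle_ineq power_mono)
    also have "\<dots> \<le> 2 * ?sq \<xi> w + 2 * ?sq \<eta> w"
      using zero_le_power2[of "cmod (\<xi> w) - cmod (\<eta> w)"] by (simp add: power2_eq_square algebra_simps)
    finally show ?thesis .
  qed
  have s': "?sq (\<xi> + \<eta>) summable_on L"
    by (rule summable_on_comparison_test[OF s]) (use le in auto)
  show "\<xi> + \<eta> \<in> l2 L"
    using assms s' by (simp add: l2_def)
  have "(l2norm L (\<xi> + \<eta>))\<^sup>2 = infsum (?sq (\<xi> + \<eta>)) L"
    unfolding l2norm_def by (simp add: infsum_nonneg)
  also have "\<dots> \<le> infsum (\<lambda>w. 2 * ?sq \<xi> w + 2 * ?sq \<eta> w) L"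
    by (rule infsum_mono[OF s' s le])
  also have "\<dots> = 2 * (l2norm L \<xi>)\<^sup>2 + 2 * (l2norm L \<eta>)\<^sup>2"
    using assms by (simp add: infsum_add infsum_cmult_right l2_summable summable_on_cmult_right
        l2norm_def infsum_nonneg)
  also have "\<dots> \<le> (2 * (l2norm L \<xi> + l2norm L \<eta>))\<^sup>2"
    using l2norm_nonneg[of L \<xi>] l2norm_nonneg[of L \<eta>]
    by (simp add: power2_eq_square algebra_simps)
  finally show "l2norm L (\<xi> + \<eta>) \<le> 2 * (l2norm L \<xi> + l2norm L \<eta>)"
    by (rule power2_le_imp_le) (simp add: l2norm_nonneg)
qed

definition basis_vec :: "tup \<Rightarrow> vec" where
  "basis_vec w = (\<lambda>v. if v = w then 1 else 0)"

lemma basis_vec_l2: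
  assumes "w \<in> L"
  shows "basis_vec w \<in> l2 L" and "l2norm L (basis_vec w) = 1"
proof -
  have sq: "(\<lambda>v. (cmod (basis_vec w v))\<^sup>2) = (\<lambda>v. if v = w then 1 else 0)"
    by (auto simp: basis_vec_def)
  have "(\<lambda>v. (cmod (basis_vec w v))\<^sup>2) summable_on L"
    unfolding sq by (rule summable_on_cong_neutral[THEN iffD1, of _ "{w}"]) (use assms in auto)
  then show "basis_vec w \<in> l2 L"
    using assms by (auto simp: l2_def basis_vec_def)
  have "infsum (\<lambda>v. if v = w then 1 else 0) L = (1::real)"
    using infsum_cong_neutral[of "{w}" L "\<lambda>v. if v = w then 1 else (0::real)"] assms by auto
  then show "l2norm L (basis_vec w) = 1"
    unfolding l2norm_def sq by simp
qed

lemma l2inner_basis_vec: "w \<in> L \<Longrightarrow> l2inner L (basis_vec w) \<eta> = \<eta> w"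
  unfolding l2inner_def using infsum_cong_neutral[of "{w}" L "\<lambda>v. cnj (basis_vec w v) * \<eta> v"]
  by (auto simp: basis_vec_def)

section \<open>Bounded operators\<close>

lemma Bop_vanishes: "T \<in> Bop L \<Longrightarrow> \<xi> \<notin> l2 L \<Longrightarrow> T \<xi> = 0"
  by (simp add: Bop_def)

lemma Bop_l2: "T \<in> Bop L \<Longrightarrow> \<xi> \<in> l2 L \<Longrightarrow> T \<xi> \<in> l2 L"
  by (simp add: Bop_def)

lemma Bop_add: "T \<in> Bop L \<Longrightarrow> \<xi> \<in> l2 L \<Longrightarrow> \<eta> \<in> l2 L \<Longrightarrow> T (\<xi> + \<eta>) = T \<xi> + T \<eta>"
  by (simp add: Bop_def)

lemma Bop_vsc: "T \<in> Bop L \<Longrightarrow> \<xi> \<in> l2 L \<Longrightarrow> T (vsc c \<xi>) = vsc c (T \<xi>)"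
  by (simp add: Bop_def)

lemma Bop_zero: "T \<in> Bop L \<Longrightarrow> T 0 = 0"
  using Bop_add[of T L 0 0] by simp

lemma Bop_bound:
  assumes "T \<in> Bop L"
  obtains C where "0 \<le> C" and "\<And>\<xi>. \<xi> \<in> l2 L \<Longrightarrow> l2norm L (T \<xi>) \<le> C * l2norm L \<xi>"
proof -
  obtain C where "\<forall>\<xi>\<in>l2 L. l2norm L (T \<xi>) \<le> C * l2norm L \<xi>"
    using assms by (auto simp: Bop_def)
  then have "\<forall>\<xi>\<in>l2 L. l2norm L (T \<xi>) \<le> max C 0 * l2norm L \<xi>"
    by (meson order_trans mult_right_mono max.cobounded1 l2norm_nonneg)
  then show ?thesis
    using that[of "max C 0"] by auto
qed

lemma BopI:
  assumes "\<And>\<xi>. \<xi> \<notin> l2 L \<Longrightarrow> T \<xi> = 0" and "\<And>\<xi>. \<xi> \<in> l2 L \<Longrightarrow> T \<xi> \<in> l2 L"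
    and "\<And>\<xi> \<eta>. \<xi> \<in> l2 L \<Longrightarrow> \<eta> \<in> l2 L \<Longrightarrow> T (\<xi> + \<eta>) = T \<xi> + T \<eta>"
    and "\<And>\<xi> c. \<xi> \<in> l2 L \<Longrightarrow> T (vsc c \<xi>) = vsc c (T \<xi>)"
    and "\<And>\<xi>. \<xi> \<in> l2 L \<Longrightarrow> l2norm L (T \<xi>) \<le> C * l2norm L \<xi>"
  shows "T \<in> Bop L"
  unfolding Bop_def using assms by blast

lemma zero_in_Bop: "0 \<in> Bop L"
  by (rule BopI[of _ _ 0]) (auto simp: vsc_def l2norm_def)

lemma Bop_comp:
  assumes a: "a \<in> Bop L" and b: "b \<in> Bop L"
  shows "a \<circ> b \<in> Bop L"
proof -
  obtain Ca where "0 \<le> Ca" and Ca: "\<And>\<xi>. \<xi> \<in> l2 L \<Longrightarrow> l2norm L (a \<xi>) \<le> Ca * l2norm L \<xi>"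
    using Bop_bound[OF a] by blast
  obtain Cb where Cb: "\<And>\<xi>. \<xi> \<in> l2 L \<Longrightarrow> l2norm L (b \<xi>) \<le> Cb * l2norm L \<xi>"
    using Bop_bound[OF b] by blast
  show ?thesis
  proof (rule BopI)
    fix \<xi> \<eta> c
    show "\<xi> \<notin> l2 L \<Longrightarrow> (a \<circ> b) \<xi> = 0"
      by (simp add: Bop_vanishes[OF b] Bop_zero[OF a])
    assume \<xi>: "\<xi> \<in> l2 L"
    then show "(a \<circ> b) \<xi> \<in> l2 L"
      by (simp add: Bop_l2 a b)
    show "\<eta> \<in> l2 L \<Longrightarrow> (a \<circ> b) (\<xi> + \<eta>) = (a \<circ> b) \<xi> + (a \<circ> b) \<eta>"
      using \<xi> by (simp add: Bop_add[OF b] Bop_add[OF a] Bop_l2[OF b])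
    show "(a \<circ> b) (vsc c \<xi>) = vsc c ((a \<circ> b) \<xi>)"
      using \<xi> by (simp add: Bop_vsc[OF b] Bop_vsc[OF a] Bop_l2[OF b])
    show "l2norm L ((a \<circ> b) \<xi>) \<le> (Ca * Cb) * l2norm L \<xi>"
      using order_trans[OF Ca[OF Bop_l2[OF b \<xi>]] mult_left_mono[OF Cb[OF \<xi>] \<open>0 \<le> Ca\<close>]]
      by (simp add: mult.assoc)
  qed
qed

lemma Bop_plus:
  assumes a: "a \<in> Bop L" and b: "b \<in> Bop L"
  shows "a + b \<in> Bop L"
proof -
  obtain Ca where Ca: "\<And>\<xi>. \<xi> \<in> l2 L \<Longrightarrow> l2norm L (a \<xi>) \<le> Ca * l2norm L \<xi>"
    using Bop_bound[OF a] by blast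
  obtain Cb where Cb: "\<And>\<xi>. \<xi> \<in> l2 L \<Longrightarrow> l2norm L (b \<xi>) \<le> Cb * l2norm L \<xi>"
    using Bop_bound[OF b] by blast
  show ?thesis
  proof (rule BopI)
    fix \<xi> \<eta> c
    show "\<xi> \<notin> l2 L \<Longrightarrow> (a + b) \<xi> = 0"
      by (simp add: Bop_vanishes[OF a] Bop_vanishes[OF b])
    assume \<xi>: "\<xi> \<in> l2 L"
    then show "(a + b) \<xi> \<in> l2 L"
      by (simp add: Bop_l2 a b l2_add(1))
    show "\<eta> \<in> l2 L \<Longrightarrow> (a + b) (\<xi> + \<eta>) = (a + b) \<xi> + (a + b) \<eta>"
      using \<xi> by (simp add: Bop_add[OF a] Bop_add[OF b] algebra_simps)
    show "(a + b) (vsc c \<xi>) = vsc c ((a + b) \<xi>)"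
      using \<xi> by (simp add: Bop_vsc[OF a] Bop_vsc[OF b]) (simp add: vsc_def fun_eq_iff algebra_simps)
    show "l2norm L ((a + b) \<xi>) \<le> (2 * (Ca + Cb)) * l2norm L \<xi>"
      using l2_add(2)[OF Bop_l2[OF a \<xi>] Bop_l2[OF b \<xi>]] Ca[OF \<xi>] Cb[OF \<xi>]
      by (simp add: algebra_simps)
  qed
qed

lemma Bop_osc:
  assumes a: "a \<in> Bop L"
  shows "osc c a \<in> Bop L"
proof -
  obtain C where C: "\<And>\<xi>. \<xi> \<in> l2 L \<Longrightarrow> l2norm L (a \<xi>) \<le> C * l2norm L \<xi>"
    using Bop_bound[OF a] by blast
  show ?thesis
  proof (rule BopI)
    fix \<xi> \<eta> k
    show "\<xi> \<notin> l2 L \<Longrightarrow> osc c a \<xi> = 0"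
      by (simp add: osc_def vsc_def Bop_vanishes[OF a] fun_eq_iff)
    assume \<xi>: "\<xi> \<in> l2 L"
    then show "osc c a \<xi> \<in> l2 L"
      unfolding osc_def by (simp add: Bop_l2 a l2_vsc(1))
    show "\<eta> \<in> l2 L \<Longrightarrow> osc c a (\<xi> + \<eta>) = osc c a \<xi> + osc c a \<eta>"
      using \<xi> by (simp add: osc_def Bop_add[OF a]) (simp add: vsc_def fun_eq_iff algebra_simps)
    show "osc c a (vsc k \<xi>) = vsc k (osc c a \<xi>)"
      using \<xi> by (simp add: osc_def Bop_vsc[OF a]) (simp add: vsc_def fun_eq_iff)
    show "l2norm L (osc c a \<xi>) \<le> (cmod c * C) * l2norm L \<xi>"
      using order_trans[OF l2_vsc(2)[OF Bop_l2[OF a \<xi>]] mult_left_mono[OF C[OF \<xi>]]]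
      by (simp add: osc_def mult.assoc)
  qed
qed

lemma Bop_diff:
  assumes "a \<in> Bop L" and "b \<in> Bop L"
  shows "a - b \<in> Bop L"
proof -
  have "a - b = a + osc (-1) b"
    by (simp add: osc_def vsc_def fun_eq_iff)
  then show ?thesis
    using assms Bop_plus Bop_osc by metis
qed

lemma l2norm_le_opnorm:
  assumes T: "T \<in> Bop L" and \<xi>: "\<xi> \<in> l2 L"
  shows "l2norm L (T \<xi>) \<le> opnorm L T * l2norm L \<xi>"
proof -
  obtain C where "0 \<le> C" and C: "\<And>\<xi>. \<xi> \<in> l2 L \<Longrightarrow> l2norm L (T \<xi>) \<le> C * l2norm L \<xi>"
    using Bop_bound[OF T] by blast
  show ?thesis
  proof (cases "l2norm L \<xi> = 0")
    case True
    then show ?thesis using C[OF \<xi>] by simp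
  next
    case False
    then have pos: "0 < l2norm L \<xi>"
      using l2norm_nonneg[of L \<xi>] by linarith
    have "l2norm L (T \<eta>) / l2norm L \<eta> \<le> C" if "\<eta> \<in> l2 L" for \<eta>
      using C[OF that] \<open>0 \<le> C\<close> l2norm_nonneg[of L \<eta>]
      by (cases "l2norm L \<eta> = 0") (auto simp: divide_le_eq)
    then have "bdd_above {l2norm L (T \<eta>) / l2norm L \<eta> | \<eta>. \<eta> \<in> l2 L}"
      by (intro bdd_aboveI[of _ C]) auto
    then have "l2norm L (T \<xi>) / l2norm L \<xi> \<le> opnorm L T"
      unfolding opnorm_def by (rule cSup_upper[rotated]) (use \<xi> in auto)
    then show ?thesis
      using pos by (simp add: divide_le_eq)
  qed
qed

lemma tendsto_apply_of_opnorm: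
  assumes "\<And>n. f n \<in> Bop L" and "b \<in> Bop L" and "(\<lambda>n. opnorm L (f n - b)) \<longlonglongrightarrow> 0"
    and "\<xi> \<in> l2 L"
  shows "(\<lambda>n. f n \<xi> w) \<longlonglongrightarrow> b \<xi> w"
proof (rule LIM_zero_cancel, rule Lim_null_comparison)
  have "cmod ((f n - b) \<xi> w) \<le> opnorm L (f n - b) * l2norm L \<xi>" for n
    using norm_le_l2norm[OF Bop_l2[OF Bop_diff[OF assms(1,2)] assms(4)]]
      l2norm_le_opnorm[OF Bop_diff[OF assms(1,2)] assms(4)]
    by (rule order_trans)
  then show "\<forall>\<^sub>F n in sequentially. norm (f n \<xi> w - b \<xi> w) \<le> opnorm L (f n - b) * l2norm L \<xi>"
    by simp
  show "(\<lambda>n. opnorm L (f n - b) * l2norm L \<xi>) \<longlonglongrightarrow> 0"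
    using tendsto_mult_left_zero[OF assms(3)] by simp
qed

lemma comp_Iop: "a \<in> Bop L \<Longrightarrow> a \<circ> Iop L = a"
  by (auto simp: Iop_def fun_eq_iff Bop_vanishes Bop_zero)

lemma adj_eqI:
  assumes S: "S \<in> Bop L"
    and adjoint: "\<And>\<xi> \<eta>. \<xi> \<in> l2 L \<Longrightarrow> \<eta> \<in> l2 L \<Longrightarrow> l2inner L (T \<xi>) \<eta> = l2inner L \<xi> (S \<eta>)"
  shows "adj L T = S"
  unfolding adj_def
proof (rule the_equality)
  fix S' assume S': "S' \<in> Bop L \<and> (\<forall>\<xi>\<in>l2 L. \<forall>\<eta>\<in>l2 L. l2inner L (T \<xi>) \<eta> = l2inner L \<xi> (S' \<eta>))"
  have "S' \<eta> w = S \<eta> w" for \<eta> w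
  proof (cases "\<eta> \<in> l2 L \<and> w \<in> L")
    case True
    then have "S' \<eta> w = l2inner L (T (basis_vec w)) \<eta>"
      using S' basis_vec_l2(1) by (simp add: l2inner_basis_vec)
    also have "\<dots> = S \<eta> w"
      using True adjoint basis_vec_l2(1) by (simp add: l2inner_basis_vec)
    finally show ?thesis .
  next
    case False
    then show ?thesis
      using Bop_vanishes[OF S] Bop_vanishes[of S'] Bop_l2[OF S] Bop_l2[of S'] S' l2_vanishes
      by metis
  qed
  then show "S' = S"
    by (simp add: fun_eq_iff)
qed (use assms in auto)

section \<open>Diagonal operators\<close>

definition diag :: "tup set \<Rightarrow> (tup \<Rightarrow> complex) \<Rightarrow> op" where
  "diag L c = (\<lambda>\<xi>. if \<xi> \<in> l2 L then (\<lambda>w. c w * \<xi> w) else 0)"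

lemma bounded_indicator_comp: "bounded ((\<lambda>w. if P w then 1 else 0 :: complex) ` A)"
  by (rule bounded_subset[of "{0, 1}"]) auto

lemma bounded_mult_comp:
  fixes f g :: "'a \<Rightarrow> 'b::real_normed_algebra"
  assumes "bounded (f ` A)" and "bounded (g ` A)"
  shows "bounded ((\<lambda>x. f x * g x) ` A)"
proof -
  obtain B C where "0 < B" "\<And>x. x \<in> A \<Longrightarrow> norm (f x) \<le> B" and "\<And>x. x \<in> A \<Longrightarrow> norm (g x) \<le> C"
    using assms by (auto simp: bounded_pos)
  then have "norm (f x * g x) \<le> B * C" if "x \<in> A" for x
    using that norm_mult_ineq[of "f x" "g x"] mult_mono[of "norm (f x)" B "norm (g x)" C]
    by (meson norm_ge_zero less_imp_le order_trans)
  then show ?thesis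
    by (auto simp: bounded_iff)
qed

lemma bounded_cnj_comp: "bounded (c ` A) \<Longrightarrow> bounded ((\<lambda>w. cnj (c w)) ` A)"
  by (auto simp: bounded_iff)

lemma diag_Bop:
  assumes "bounded (c ` L)"
  shows "diag L c \<in> Bop L"
proof -
  obtain C where "0 < C" and C: "\<And>w. w \<in> L \<Longrightarrow> cmod (c w) \<le> C"
    using assms by (auto simp: bounded_pos)
  show ?thesis
  proof (rule BopI)
    fix \<xi> \<eta> k
    show "\<xi> \<notin> l2 L \<Longrightarrow> diag L c \<xi> = 0"
      by (simp add: diag_def)
    assume \<xi>: "\<xi> \<in> l2 L"
    then show "diag L c \<xi> \<in> l2 L" and "l2norm L (diag L c \<xi>) \<le> C * l2norm L \<xi>"
      using l2_mult[OF \<xi> C] \<open>0 < C\<close> by (simp_all add: diag_def)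
    show "\<eta> \<in> l2 L \<Longrightarrow> diag L c (\<xi> + \<eta>) = diag L c \<xi> + diag L c \<eta>"
      using \<xi> by (simp add: diag_def l2_add(1) fun_eq_iff algebra_simps)
    show "diag L c (vsc k \<xi>) = vsc k (diag L c \<xi>)"
      using \<xi> by (simp add: diag_def l2_vsc(1)) (simp add: vsc_def fun_eq_iff)
  qed
qed

lemma diag_cong: "(\<And>w. w \<in> L \<Longrightarrow> c w = c' w) \<Longrightarrow> diag L c = diag L c'"
  by (auto simp: diag_def fun_eq_iff intro: l2_vanishes)

lemma diag_comp:
  "bounded (c' ` L) \<Longrightarrow> diag L c \<circ> diag L c' = diag L (\<lambda>w. c w * c' w)"
  using Bop_l2[OF diag_Bop, of c' L] by (auto simp: diag_def fun_eq_iff)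

lemma diag_plus: "diag L c + diag L c' = diag L (\<lambda>w. c w + c' w)"
  by (auto simp: diag_def fun_eq_iff algebra_simps)

lemma diag_minus: "diag L c - diag L c' = diag L (\<lambda>w. c w - c' w)"
  by (auto simp: diag_def fun_eq_iff algebra_simps)

lemma diag_sum: "(\<Sum>k\<in>K. diag L (c k)) = diag L (\<lambda>w. \<Sum>k\<in>K. c k w)"
  by (induction K rule: infinite_finite_induct) (auto simp: diag_plus, auto simp: diag_def fun_eq_iff)

lemma osc_diag: "osc k (diag L c) = diag L (\<lambda>w. k * c w)"
  by (auto simp: diag_def osc_def vsc_def fun_eq_iff)

lemma osc_comp: "osc k a \<circ> b = osc k (a \<circ> b)"
  by (simp add: osc_def comp_def)

lemma osc_osc: "osc k (osc c a) = osc (k * c) a"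
  by (simp add: osc_def vsc_def fun_eq_iff)

lemma osc_one [simp]: "osc 1 a = a" and osc_zero [simp]: "osc 0 a = 0"
  by (simp_all add: osc_def vsc_def fun_eq_iff)

lemma diag_zero [simp]: "diag L (\<lambda>_. 0) = 0"
  by (simp add: diag_def fun_eq_iff)

lemma diag_basis_vec: "w \<in> L \<Longrightarrow> diag L c (basis_vec w) w = c w"
  using basis_vec_l2(1) by (auto simp: diag_def basis_vec_def)

lemma diag_eqD: "diag L c = diag L c' \<Longrightarrow> w \<in> L \<Longrightarrow> c w = c' w"
  by (metis diag_basis_vec)

lemma adj_diag:
  assumes "bounded (c ` L)"
  shows "adj L (diag L c) = diag L (\<lambda>w. cnj (c w))"
proof (rule adj_eqI)
  show "diag L (\<lambda>w. cnj (c w)) \<in> Bop L"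
    by (rule diag_Bop[OF bounded_cnj_comp[OF assms]])
qed (auto simp: diag_def l2inner_def intro!: infsum_cong)

lemma Iop_eq_diag: "Iop L = diag L (\<lambda>_. 1)"
  by (auto simp: Iop_def diag_def fun_eq_iff)

lemma Qempty_eq_diag: "Qempty L = diag L (\<lambda>w. if w = tempty then 1 else 0)"
  unfolding Qempty_def diag_def by (intro ext) auto

lemma norm_limit_of_diag:
  assumes bounded: "\<And>n. bounded (cs n ` L)" and b: "b \<in> Bop L"
    and lim: "(\<lambda>n. opnorm L (diag L (cs n) - b)) \<longlonglongrightarrow> 0"
  obtains c where "bounded (c ` L)" and "b = diag L c" and "\<And>w. w \<in> L \<Longrightarrow> (\<lambda>n. cs n w) \<longlonglongrightarrow> c w"
proof
  define c where "c w = b (basis_vec w) w" for w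
  have f: "diag L (cs n) \<in> Bop L" for n
    by (rule diag_Bop[OF bounded])
  note tendsto = tendsto_apply_of_opnorm[OF f b lim]
  show conv: "(\<lambda>n. cs n w) \<longlonglongrightarrow> c w" if "w \<in> L" for w
    using tendsto[OF basis_vec_l2(1)[OF that], where w = w] by (simp add: diag_basis_vec[OF that] c_def)
  obtain C where C: "\<And>\<xi>. \<xi> \<in> l2 L \<Longrightarrow> l2norm L (b \<xi>) \<le> C * l2norm L \<xi>"
    using Bop_bound[OF b] by blast
  have "cmod (c w) \<le> C" if "w \<in> L" for w
    using order_trans[OF norm_le_l2norm[OF Bop_l2[OF b basis_vec_l2(1)[OF that]], where w = w]
        C[OF basis_vec_l2(1)[OF that]]]
    by (simp add: c_def basis_vec_l2(2)[OF that])
  then show "bounded (c ` L)"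
    by (auto simp: bounded_iff)
  have "b \<xi> w = diag L c \<xi> w" for \<xi> w
  proof (cases "\<xi> \<in> l2 L \<and> w \<in> L")
    case True
    have "(\<lambda>n. diag L (cs n) \<xi> w) \<longlonglongrightarrow> c w * \<xi> w"
      using tendsto_mult[OF conv tendsto_const] True by (simp add: diag_def)
    then show ?thesis
      using tendsto[of \<xi> w] True LIMSEQ_unique by (fastforce simp: diag_def)
  next
    case False
    then show ?thesis
      using Bop_vanishes[OF b] l2_vanishes[OF Bop_l2[OF b]] l2_vanishes[of \<xi> L]
      by (auto simp: diag_def)
  qed
  then show "b = diag L c"
    by (simp add: fun_eq_iff)
qed

definition diag_agree :: "tup set \<Rightarrow> tup \<Rightarrow> tup \<Rightarrow> op set" where
  "diag_agree L x y = {diag L c | c. bounded (c ` L) \<and> c x = c y}"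

lemma norm_closed_diag_agree:
  assumes "x \<in> L" and "y \<in> L"
  shows "norm_closed L (diag_agree L x y)"
  unfolding norm_closed_def
proof (intro allI impI)
  fix f b assume "\<forall>n. f n \<in> diag_agree L x y" and b: "b \<in> Bop L"
    and lim: "(\<lambda>n. opnorm L (f n - b)) \<longlonglongrightarrow> 0"
  then have "\<forall>n. \<exists>c. f n = diag L c \<and> bounded (c ` L) \<and> c x = c y"
    unfolding diag_agree_def by blast
  then obtain cs where cs: "\<And>n. f n = diag L (cs n)" "\<And>n. bounded (cs n ` L)" "\<And>n. cs n x = cs n y"
    by metis
  obtain c where "bounded (c ` L)" "b = diag L c" and conv: "\<And>w. w \<in> L \<Longrightarrow> (\<lambda>n. cs n w) \<longlonglongrightarrow> c w"
    using norm_limit_of_diag[of cs L b] cs(2) b lim unfolding cs(1) by blast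
  moreover have "c x = c y"
    using conv[OF assms(1)] conv[OF assms(2)] LIMSEQ_unique by (simp add: cs(3))
  ultimately show "b \<in> diag_agree L x y"
    unfolding diag_agree_def by blast
qed

lemma diag_agree_closed:
  assumes "a \<in> diag_agree L x y" and "b \<in> diag_agree L x y"
  shows "a + b \<in> diag_agree L x y" and "a \<circ> b \<in> diag_agree L x y"
    and "osc k a \<in> diag_agree L x y" and "adj L a \<in> diag_agree L x y"
proof -
  obtain c c' where a: "a = diag L c" "bounded (c ` L)" "c x = c y"
    and b: "b = diag L c'" "bounded (c' ` L)" "c' x = c' y"
    using assms unfolding diag_agree_def by blast
  show "a + b \<in> diag_agree L x y"
    unfolding diag_agree_def a b diag_plus using bounded_plus_comp[OF a(2) b(2)] a(3) b(3) by auto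
  show "a \<circ> b \<in> diag_agree L x y"
    unfolding diag_agree_def a b diag_comp[OF b(2)] using bounded_mult_comp[OF a(2) b(2)] a(3) b(3)
    by auto
  show "osc k a \<in> diag_agree L x y"
  proof -
    have "bounded ((\<lambda>_. k) ` L)"
      by (rule bounded_subset[of "{k}"]) auto
    then show ?thesis
      unfolding diag_agree_def a osc_diag using bounded_mult_comp[OF _ a(2)] a(3) by auto
  qed
  show "adj L a \<in> diag_agree L x y"
    unfolding diag_agree_def a adj_diag[OF a(2)] using bounded_cnj_comp[OF a(2)] a(3) by auto
qed

section \<open>Words and shift operators\<close>

lemma tcat_apply [simp]: "(\<mu> \<star> \<nu>) i = \<mu> i @ \<nu> i"
  by (simp add: tcat_def)

lemma tcat_assoc: "\<alpha> \<star> \<beta> \<star> \<gamma> = \<alpha> \<star> (\<beta> \<star> \<gamma>)"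
  by (simp add: tcat_def)

lemma tempty_apply [simp]: "tempty i = []"
  by (simp add: tempty_def)

lemma tcat_tempty [simp]: "tempty \<star> x = x" "x \<star> tempty = x"
  by (simp_all add: tcat_def)

lemma inj_tcat: "inj ((\<star>) \<mu>)"
  by (rule injI) (simp add: tcat_def fun_eq_iff)

lemma delta_neq_tempty: "delta i k \<noteq> tempty"
  by (auto simp: delta_def tempty_def fun_eq_iff)

definition tdrop :: "tup \<Rightarrow> tup \<Rightarrow> tup" where
  "tdrop \<mu> v = (\<lambda>i. drop (length (\<mu> i)) (v i))"

lemma tdrop_tcat [simp]: "tdrop \<mu> (\<mu> \<star> w) = w"
  by (simp add: tdrop_def)

lemma tcat_tdrop:
  assumes "\<forall>i. prefix (\<mu> i) (v i)"
  shows "\<mu> \<star> tdrop \<mu> v = v"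
proof
  fix i
  obtain zs where "v i = \<mu> i @ zs"
    using assms prefix_def by metis
  then show "(\<mu> \<star> tdrop \<mu> v) i = v i"
    by (simp add: tdrop_def)
qed

lemma prefix_delta_iff: "(\<forall>j. prefix (delta i k j) (v j)) \<longleftrightarrow> v i \<noteq> [] \<and> hd (v i) = k"
proof -
  have "prefix [k] xs \<longleftrightarrow> xs \<noteq> [] \<and> hd xs = k" for xs
    by (cases xs) auto
  then show ?thesis
    unfolding delta_def by (metis Nil_prefix)
qed

lemma Tm_tcat: "\<xi> \<in> l2 L \<Longrightarrow> \<mu> \<star> w \<in> L \<Longrightarrow> Tm L \<mu> \<xi> (\<mu> \<star> w) = \<xi> w"
  by (simp add: Tm_def)

lemma Tm_vanishes: "v \<notin> (\<star>) \<mu> ` {w. \<mu> \<star> w \<in> L} \<Longrightarrow> Tm L \<mu> \<xi> v = 0"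
  unfolding Tm_def by (auto simp: image_iff) (metis tcat_tdrop)

lemma sum_over_tcat_image:
  fixes f :: "tup \<Rightarrow> 'b::{comm_monoid_add, t2_space}"
  assumes "\<And>v. v \<notin> (\<star>) \<mu> ` {w. \<mu> \<star> w \<in> L} \<Longrightarrow> f v = 0"
  shows "f summable_on L \<longleftrightarrow> (\<lambda>w. f (\<mu> \<star> w)) summable_on {w. \<mu> \<star> w \<in> L}"
    and "infsum f L = infsum (\<lambda>w. f (\<mu> \<star> w)) {w. \<mu> \<star> w \<in> L}"
proof -
  have inj: "inj_on ((\<star>) \<mu>) {w. \<mu> \<star> w \<in> L}"
    using inj_tcat by (rule inj_on_subset) simp
  have "f summable_on L \<longleftrightarrow> f summable_on ((\<star>) \<mu> ` {w. \<mu> \<star> w \<in> L})"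
    by (rule summable_on_cong_neutral) (use assms in auto)
  then show "f summable_on L \<longleftrightarrow> (\<lambda>w. f (\<mu> \<star> w)) summable_on {w. \<mu> \<star> w \<in> L}"
    using summable_on_reindex[OF inj] by (simp add: comp_def)
  have "infsum f L = infsum f ((\<star>) \<mu> ` {w. \<mu> \<star> w \<in> L})"
    by (rule infsum_cong_neutral) (use assms in auto)
  then show "infsum f L = infsum (\<lambda>w. f (\<mu> \<star> w)) {w. \<mu> \<star> w \<in> L}"
    using infsum_reindex[OF inj] by (simp add: comp_def)
qed

definition Tstar :: "tup set \<Rightarrow> tup \<Rightarrow> op" where
  "Tstar L \<mu> = (\<lambda>\<eta>. if \<eta> \<in> l2 L then (\<lambda>w. if \<mu> \<star> w \<in> L then \<eta> (\<mu> \<star> w) else 0) else 0)"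

locale factorial_lang =
  fixes d N :: nat and L :: "tup set"
  assumes factorial_language: "factorial_language d N L"
begin

lemma factor_closed: "\<alpha> \<star> \<nu> \<star> \<beta> \<in> L \<Longrightarrow> \<nu> \<in> L"
  using factorial_language unfolding factorial_language_def by blast

lemma prefix_closed: "\<mu> \<star> w \<in> L \<Longrightarrow> \<mu> \<in> L"
  using factor_closed[of tempty \<mu> w] by simp

lemma suffix_closed: "\<mu> \<star> w \<in> L \<Longrightarrow> w \<in> L"
  using factor_closed[of \<mu> w tempty] by simp

lemma letters_in_alphabet: "w \<in> L \<Longrightarrow> set (w i) \<subseteq> {1..d}"
  using factorial_language by (auto simp: factorial_language_def)

lemma eq_tempty_if_coords_empty:
  assumes "w \<in> L" and "\<forall>i\<in>{1..N}. w i = []"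
  shows "w = tempty"
  using assms factorial_language by (auto simp: factorial_language_def fun_eq_iff)

lemma split_first_letter:
  assumes w: "w \<in> L" and "w i \<noteq> []"
  obtains k w' where "delta i k \<in> L" and "w' \<in> L" and "w = delta i k \<star> w'"
proof
  show eq: "w = delta i (hd (w i)) \<star> w(i := tl (w i))"
    using \<open>w i \<noteq> []\<close> by (auto simp: delta_def fun_eq_iff)
  show "delta i (hd (w i)) \<in> L"
    using w eq prefix_closed by metis
  show "w(i := tl (w i)) \<in> L"
    using w eq suffix_closed by metis
qed

lemma Tm_l2:
  assumes \<xi>: "\<xi> \<in> l2 L"
  shows "Tm L \<mu> \<xi> \<in> l2 L" and "l2norm L (Tm L \<mu> \<xi>) \<le> 1 * l2norm L \<xi>"
proof -
  let ?A = "{w. \<mu> \<star> w \<in> L}"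
  have sq: "\<And>w. w \<in> ?A \<Longrightarrow> (cmod (Tm L \<mu> \<xi> (\<mu> \<star> w)))\<^sup>2 = (cmod (\<xi> w))\<^sup>2"
    by (simp add: Tm_tcat[OF \<xi>])
  have A: "?A \<subseteq> L"
    using suffix_closed by blast
  note shift = sum_over_tcat_image[of \<mu> L "\<lambda>v. (cmod (Tm L \<mu> \<xi> v))\<^sup>2"]
  have "(\<lambda>w. (cmod (Tm L \<mu> \<xi> (\<mu> \<star> w)))\<^sup>2) summable_on ?A"
    using l2_restrict(1)[OF \<xi> A] by (subst summable_on_cong[OF sq])
  then have "(\<lambda>v. (cmod (Tm L \<mu> \<xi> v))\<^sup>2) summable_on L"
    using shift(1) by (simp add: Tm_vanishes)
  then show "Tm L \<mu> \<xi> \<in> l2 L"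
    by (simp add: l2_def Tm_def)
  have "infsum (\<lambda>v. (cmod (Tm L \<mu> \<xi> v))\<^sup>2) L = infsum (\<lambda>w. (cmod (\<xi> w))\<^sup>2) ?A"
    using shift(2) infsum_cong[OF sq, of ?A] by (simp add: Tm_vanishes)
  also have "\<dots> \<le> infsum (\<lambda>w. (cmod (\<xi> w))\<^sup>2) L"
    by (rule l2_restrict(2)[OF \<xi> A])
  finally show "l2norm L (Tm L \<mu> \<xi>) \<le> 1 * l2norm L \<xi>"
    unfolding l2norm_def by simp
qed

lemma Tm_Bop: "Tm L \<mu> \<in> Bop L"
proof (rule BopI)
  fix \<xi> \<eta> c
  show "\<xi> \<notin> l2 L \<Longrightarrow> Tm L \<mu> \<xi> = 0"
    by (simp add: Tm_def)
  assume \<xi>: "\<xi> \<in> l2 L"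
  then show "Tm L \<mu> \<xi> \<in> l2 L" and "l2norm L (Tm L \<mu> \<xi>) \<le> 1 * l2norm L \<xi>"
    by (rule Tm_l2)+
  show "\<eta> \<in> l2 L \<Longrightarrow> Tm L \<mu> (\<xi> + \<eta>) = Tm L \<mu> \<xi> + Tm L \<mu> \<eta>"
    using \<xi> l2_add(1) by (simp add: Tm_def fun_eq_iff)
  show "Tm L \<mu> (vsc c \<xi>) = vsc c (Tm L \<mu> \<xi>)"
    using \<xi> l2_vsc(1) by (simp add: Tm_def vsc_def fun_eq_iff)
qed

lemma Tstar_l2:
  assumes \<eta>: "\<eta> \<in> l2 L"
  shows "Tstar L \<mu> \<eta> \<in> l2 L" and "l2norm L (Tstar L \<mu> \<eta>) \<le> 1 * l2norm L \<eta>"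
proof -
  let ?A = "{w. \<mu> \<star> w \<in> L}"
  have A: "?A \<subseteq> L"
    using suffix_closed by blast
  have inj: "inj_on ((\<star>) \<mu>) ?A"
    using inj_tcat by (rule inj_on_subset) simp
  have img: "(\<star>) \<mu> ` ?A \<subseteq> L"
    by auto
  have "(\<lambda>w. (cmod (Tstar L \<mu> \<eta> w))\<^sup>2) summable_on L \<longleftrightarrow> (\<lambda>w. (cmod (\<eta> (\<mu> \<star> w)))\<^sup>2) summable_on ?A"
    by (rule summable_on_cong_neutral) (use \<eta> A in \<open>auto simp: Tstar_def\<close>)
  moreover have "(\<lambda>w. (cmod (\<eta> (\<mu> \<star> w)))\<^sup>2) summable_on ?A"
    using l2_restrict(1)[OF \<eta> img] summable_on_reindex[OF inj, of "\<lambda>v. (cmod (\<eta> v))\<^sup>2"]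
    by (simp add: comp_def)
  ultimately show "Tstar L \<mu> \<eta> \<in> l2 L"
    using \<eta> suffix_closed by (auto simp: l2_def Tstar_def)
  have "infsum (\<lambda>w. (cmod (Tstar L \<mu> \<eta> w))\<^sup>2) L = infsum (\<lambda>w. (cmod (\<eta> (\<mu> \<star> w)))\<^sup>2) ?A"
    by (rule infsum_cong_neutral) (use \<eta> A in \<open>auto simp: Tstar_def\<close>)
  also have "\<dots> = infsum (\<lambda>v. (cmod (\<eta> v))\<^sup>2) ((\<star>) \<mu> ` ?A)"
    using infsum_reindex[OF inj, of "\<lambda>v. (cmod (\<eta> v))\<^sup>2"] by (simp add: comp_def)
  also have "\<dots> \<le> infsum (\<lambda>v. (cmod (\<eta> v))\<^sup>2) L"
    by (rule l2_restrict(2)[OF \<eta> img])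
  finally show "l2norm L (Tstar L \<mu> \<eta>) \<le> 1 * l2norm L \<eta>"
    unfolding l2norm_def by simp
qed

lemma Tstar_Bop: "Tstar L \<mu> \<in> Bop L"
proof (rule BopI)
  fix \<xi> \<eta> c
  show "\<xi> \<notin> l2 L \<Longrightarrow> Tstar L \<mu> \<xi> = 0"
    by (simp add: Tstar_def)
  assume \<xi>: "\<xi> \<in> l2 L"
  then show "Tstar L \<mu> \<xi> \<in> l2 L" and "l2norm L (Tstar L \<mu> \<xi>) \<le> 1 * l2norm L \<xi>"
    by (rule Tstar_l2)+
  show "\<eta> \<in> l2 L \<Longrightarrow> Tstar L \<mu> (\<xi> + \<eta>) = Tstar L \<mu> \<xi> + Tstar L \<mu> \<eta>"
    using \<xi> l2_add(1) by (simp add: Tstar_def fun_eq_iff)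
  show "Tstar L \<mu> (vsc c \<xi>) = vsc c (Tstar L \<mu> \<xi>)"
    using \<xi> l2_vsc(1) by (simp add: Tstar_def vsc_def fun_eq_iff)
qed

lemma adj_Tm: "adj L (Tm L \<mu>) = Tstar L \<mu>"
proof (rule adj_eqI[OF Tstar_Bop])
  fix \<xi> \<eta> assume \<xi>: "\<xi> \<in> l2 L" and \<eta>: "\<eta> \<in> l2 L"
  let ?A = "{w. \<mu> \<star> w \<in> L}"
  have "l2inner L (Tm L \<mu> \<xi>) \<eta> = infsum (\<lambda>w. cnj (Tm L \<mu> \<xi> (\<mu> \<star> w)) * \<eta> (\<mu> \<star> w)) ?A"
    unfolding l2inner_def by (rule sum_over_tcat_image(2)) (simp add: Tm_vanishes)
  also have "\<dots> = infsum (\<lambda>w. cnj (\<xi> w) * Tstar L \<mu> \<eta> w) ?A"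
    by (rule infsum_cong) (use \<xi> \<eta> in \<open>simp add: Tm_tcat Tstar_def\<close>)
  also have "\<dots> = l2inner L \<xi> (Tstar L \<mu> \<eta>)"
    unfolding l2inner_def by (rule infsum_cong_neutral) (use \<eta> suffix_closed in \<open>auto simp: Tstar_def\<close>)
  finally show "l2inner L (Tm L \<mu> \<xi>) \<eta> = l2inner L \<xi> (Tstar L \<mu> \<eta>)" .
qed

lemma adj_Tm_comp_Tm: "adj L (Tm L \<mu>) \<circ> Tm L \<mu> = diag L (\<lambda>w. if \<mu> \<star> w \<in> L then 1 else 0)"
proof
  fix \<xi>
  show "(adj L (Tm L \<mu>) \<circ> Tm L \<mu>) \<xi> = diag L (\<lambda>w. if \<mu> \<star> w \<in> L then 1 else 0) \<xi>"
  proof (cases "\<xi> \<in> l2 L")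
    case True
    then show ?thesis
      using Tm_l2(1)[OF True, of \<mu>] suffix_closed l2_vanishes[OF True]
      by (auto simp: adj_Tm Tstar_def diag_def Tm_tcat fun_eq_iff)
  next
    case False
    then show ?thesis
      unfolding comp_def adj_Tm by (simp add: Tstar_def diag_def Tm_def fun_eq_iff)
  qed
qed

lemma Tm_comp_adj_Tm:
  "Tm L \<mu> \<circ> adj L (Tm L \<mu>) = diag L (\<lambda>v. if \<forall>i. prefix (\<mu> i) (v i) then 1 else 0)"
proof
  fix \<eta>
  show "(Tm L \<mu> \<circ> adj L (Tm L \<mu>)) \<eta> = diag L (\<lambda>v. if \<forall>i. prefix (\<mu> i) (v i) then 1 else 0) \<eta>"
  proof (cases "\<eta> \<in> l2 L")
    case \<eta>: True
    have "Tm L \<mu> (Tstar L \<mu> \<eta>) v = (if \<forall>i. prefix (\<mu> i) (v i) then 1 else 0) * \<eta> v" for v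
    proof (cases "v \<in> L \<and> (\<forall>i. prefix (\<mu> i) (v i))")
      case True
      then have "\<mu> \<star> tdrop \<mu> v \<in> L" and "\<mu> \<star> tdrop \<mu> v = v"
        using tcat_tdrop by auto
      then show ?thesis
        using True \<eta> Tstar_l2(1)[OF \<eta>] by (simp add: Tm_def Tstar_def tdrop_def[symmetric])
    next
      case False
      then show ?thesis
        using Tstar_l2(1)[OF \<eta>] l2_vanishes[OF \<eta>] by (auto simp: Tm_def)
    qed
    then show ?thesis
      unfolding comp_def adj_Tm using \<eta> by (simp add: diag_def fun_eq_iff)
  next
    case False
    then show ?thesis
      unfolding comp_def adj_Tm by (simp add: Tstar_def diag_def Tm_def fun_eq_iff)
  qed
qed

lemma Tm_basis_vec:
  assumes "\<mu> \<star> w \<in> L"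
  shows "Tm L \<mu> (basis_vec w) = basis_vec (\<mu> \<star> w)"
proof
  fix v
  show "Tm L \<mu> (basis_vec w) v = basis_vec (\<mu> \<star> w) v"
  proof (cases "v \<in> L \<and> (\<forall>i. prefix (\<mu> i) (v i))")
    case True
    then have "tdrop \<mu> v = w \<longleftrightarrow> v = \<mu> \<star> w"
      using tcat_tdrop[of \<mu> v] by (metis tdrop_tcat)
    then show ?thesis
      using True basis_vec_l2(1)[OF suffix_closed[OF assms]]
      by (simp add: Tm_def basis_vec_def tdrop_def[symmetric])
  next
    case False
    then have "v \<noteq> \<mu> \<star> w"
      using assms by auto
    then show ?thesis
      using False by (auto simp: Tm_def basis_vec_def)
  qed
qed

lemma Pi_eq_diag: "Pi L d i = diag L (\<lambda>v. if v i \<noteq> [] then 1 else 0)"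
proof -
  have "Pi L d i = diag L (\<lambda>v. \<Sum>k\<in>{1..d}. if v i \<noteq> [] \<and> hd (v i) = k then 1 else 0)"
    unfolding Pi_def Tm_comp_adj_Tm prefix_delta_iff by (rule diag_sum)
  also have "\<dots> = diag L (\<lambda>v. if v i \<noteq> [] then 1 else 0)"
  proof (rule diag_cong)
    fix v assume "v \<in> L"
    then have "v i \<noteq> [] \<Longrightarrow> hd (v i) \<in> {1..d}"
      using letters_in_alphabet hd_in_set by blast
    then show "(\<Sum>k\<in>{1..d}. if v i \<noteq> [] \<and> hd (v i) = k then 1 else 0) = (if v i \<noteq> [] then 1 else (0::complex))"
      by (simp add: sum.delta')
  qed
  finally show ?thesis .
qed

lemma QG_eq_diag: "finite G \<Longrightarrow> QG L d G = diag L (\<lambda>v. if \<forall>i\<in>G. v i = [] then 1 else 0)"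
proof -
  have "foldr (\<lambda>i acc. (Iop L - Pi L d i) \<circ> acc) xs (Iop L)
      = diag L (\<lambda>v. if \<forall>i\<in>set xs. v i = [] then 1 else 0)" for xs
  proof (induction xs)
    case Nil
    then show ?case by (simp add: Iop_eq_diag)
  next
    case (Cons i xs)
    have "Iop L - Pi L d i = diag L (\<lambda>v. if v i = [] then 1 else 0)"
      unfolding Iop_eq_diag Pi_eq_diag diag_minus by (rule diag_cong) simp
    then have "foldr (\<lambda>i acc. (Iop L - Pi L d i) \<circ> acc) (i # xs) (Iop L)
        = diag L (\<lambda>v. if v i = [] then 1 else 0) \<circ> diag L (\<lambda>v. if \<forall>i\<in>set xs. v i = [] then 1 else 0)"
      by (simp only: foldr_Cons comp_apply Cons.IH)
    also have "\<dots> = diag L (\<lambda>v. if \<forall>i\<in>set (i # xs). v i = [] then 1 else 0)"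
      by (subst diag_comp[OF bounded_indicator_comp]) (rule diag_cong, simp)
    finally show ?case .
  qed
  then show "finite G \<Longrightarrow> ?thesis"
    by (simp add: QG_def)
qed

lemma tempty_in_L_if_pos:
  assumes "0 < N"
  shows "tempty \<in> L"
proof -
  have "1 \<in> {1..N}"
    using assms by simp
  then obtain k where "delta 1 k \<in> L"
    using factorial_language unfolding factorial_language_def by blast
  then show ?thesis
    using suffix_closed[of "delta 1 k" tempty] by simp
qed

end

section \<open>The algebra \<open>A\<close> and the modules \<open>X\<^sub>i\<close>\<close>

lemma Aalg_minimal:
  assumes "{adj L (Tm L \<mu>) \<circ> Tm L \<mu> | \<mu>. \<mu> \<in> L} \<subseteq> S" and "S \<subseteq> Bop L"
    and "\<forall>a\<in>S. \<forall>b\<in>S. a + b \<in> S \<and> a \<circ> b \<in> S" and "\<forall>a\<in>S. \<forall>c. osc c a \<in> S"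
    and "\<forall>a\<in>S. adj L a \<in> S" and "norm_closed L S"
  shows "Aalg L \<subseteq> S"
  unfolding Aalg_def cstar_def by (rule Inter_lower) (use assms in simp)

lemma Aalg_generator: "\<mu> \<in> L \<Longrightarrow> adj L (Tm L \<mu>) \<circ> Tm L \<mu> \<in> Aalg L"
  unfolding Aalg_def cstar_def by blast

lemma Aalg_comp_osc:
  assumes "a \<in> Aalg L" and "b \<in> Aalg L"
  shows "a \<circ> b \<in> Aalg L" and "osc c a \<in> Aalg L"
proof -
  have "a \<circ> b \<in> S \<and> osc c a \<in> S"
    if "S \<in> {S. {adj L (Tm L \<mu>) \<circ> Tm L \<mu> | \<mu>. \<mu> \<in> L} \<subseteq> S \<and> S \<subseteq> Bop L \<and>
      (\<forall>a\<in>S. \<forall>b\<in>S. a + b \<in> S \<and> a \<circ> b \<in> S) \<and> (\<forall>a\<in>S. \<forall>c. osc c a \<in> S) \<and>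
      (\<forall>a\<in>S. adj L a \<in> S) \<and> norm_closed L S}" for S
  proof -
    have "a \<in> S" "b \<in> S"
      using assms that unfolding Aalg_def cstar_def by (meson InterD)+
    then show ?thesis
      using that by simp
  qed
  then show "a \<circ> b \<in> Aalg L" and "osc c a \<in> Aalg L"
    unfolding Aalg_def cstar_def by auto
qed

lemma Xi_minimal:
  assumes "{Tm L (delta i k) \<circ> a | k a. k \<in> {1..d} \<and> a \<in> Aalg L \<and> delta i k \<in> L} \<subseteq> S"
    and "S \<subseteq> Bop L" and "0 \<in> S" and "\<forall>a\<in>S. \<forall>b\<in>S. a + b \<in> S" and "\<forall>a\<in>S. \<forall>c. osc c a \<in> S"
    and "norm_closed L S"
  shows "Xi L d i \<subseteq> S"
  unfolding Xi_def clspan_def by (rule Inter_lower) (use assms in simp)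

lemma Xi_generator:
  "k \<in> {1..d} \<Longrightarrow> delta i k \<in> L \<Longrightarrow> a \<in> Aalg L \<Longrightarrow> Tm L (delta i k) \<circ> a \<in> Xi L d i"
  unfolding Xi_def clspan_def by blast

definition range_supported_on_coord :: "tup set \<Rightarrow> nat \<Rightarrow> op set" where
  "range_supported_on_coord L i = {T \<in> Bop L. \<forall>\<zeta> w. w i = [] \<longrightarrow> T \<zeta> w = 0}"

lemma range_supported_on_coord_closed:
  shows "0 \<in> range_supported_on_coord L i"
    and "\<forall>a\<in>range_supported_on_coord L i. \<forall>b\<in>range_supported_on_coord L i. a + b \<in> range_supported_on_coord L i"
    and "\<forall>a\<in>range_supported_on_coord L i. \<forall>c. osc c a \<in> range_supported_on_coord L i"
proof -
  show "0 \<in> range_supported_on_coord L i"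
    unfolding range_supported_on_coord_def by (simp add: zero_in_Bop)
  show "\<forall>a\<in>range_supported_on_coord L i. \<forall>b\<in>range_supported_on_coord L i. a + b \<in> range_supported_on_coord L i"
    unfolding range_supported_on_coord_def by (simp add: Bop_plus)
  show "\<forall>a\<in>range_supported_on_coord L i. \<forall>c. osc c a \<in> range_supported_on_coord L i"
  proof (intro ballI allI)
    fix a c assume "a \<in> range_supported_on_coord L i"
    then show "osc c a \<in> range_supported_on_coord L i"
      using Bop_osc[of a L c] unfolding range_supported_on_coord_def osc_def vsc_def by simp
  qed
qed

lemma norm_closed_range_supported_on_coord: "norm_closed L (range_supported_on_coord L i)"
  unfolding norm_closed_def
proof (intro allI impI)
  fix f b assume f: "\<forall>n. f n \<in> range_supported_on_coord L i" and b: "b \<in> Bop L"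
    and lim: "(\<lambda>n. opnorm L (f n - b)) \<longlonglongrightarrow> 0"
  have "b \<zeta> w = 0" if "w i = []" for \<zeta> w
  proof (cases "\<zeta> \<in> l2 L")
    case True
    have "\<And>n. f n \<in> Bop L"
      using f unfolding range_supported_on_coord_def by blast
    then have "(\<lambda>n. f n \<zeta> w) \<longlonglongrightarrow> b \<zeta> w"
      by (rule tendsto_apply_of_opnorm[OF _ b lim True])
    moreover have "(\<lambda>n. f n \<zeta> w) = (\<lambda>n. 0)"
      using f that unfolding range_supported_on_coord_def by simp
    ultimately show ?thesis
      by (simp add: LIMSEQ_const_iff)
  qed (simp add: Bop_vanishes[OF b])
  then show "b \<in> range_supported_on_coord L i"
    unfolding range_supported_on_coord_def using b by blast
qed

locale nonempty_factorial_lang = factorial_lang +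
  assumes tempty_in_L: "tempty \<in> L"
begin

lemma Aalg_subset_diag_agree:
  assumes x: "x \<in> L" and y: "y \<in> L" and followers: "\<And>\<mu>. \<mu> \<in> L \<Longrightarrow> \<mu> \<star> x \<in> L \<longleftrightarrow> \<mu> \<star> y \<in> L"
  shows "Aalg L \<subseteq> diag_agree L x y"
proof (rule Aalg_minimal)
  show "{adj L (Tm L \<mu>) \<circ> Tm L \<mu> | \<mu>. \<mu> \<in> L} \<subseteq> diag_agree L x y"
  proof
    fix g assume "g \<in> {adj L (Tm L \<mu>) \<circ> Tm L \<mu> | \<mu>. \<mu> \<in> L}"
    then obtain \<mu> where "\<mu> \<in> L" and g: "g = diag L (\<lambda>w. if \<mu> \<star> w \<in> L then 1 else 0)"
      by (auto simp: adj_Tm_comp_Tm)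
    moreover have "bounded ((\<lambda>w. if \<mu> \<star> w \<in> L then 1 else 0 :: complex) ` L)"
      by (rule bounded_indicator_comp)
    ultimately show "g \<in> diag_agree L x y"
      unfolding diag_agree_def using followers by auto
  qed
  show "diag_agree L x y \<subseteq> Bop L"
    unfolding diag_agree_def using diag_Bop by blast
  show "norm_closed L (diag_agree L x y)"
    by (rule norm_closed_diag_agree[OF x y])
qed (simp_all add: diag_agree_closed)

lemma Aalg_diagE:
  assumes "a \<in> Aalg L"
  obtains c where "bounded (c ` L)" and "a = diag L c"
proof -
  have "a \<in> diag_agree L tempty tempty"
    using Aalg_subset_diag_agree[OF tempty_in_L tempty_in_L] assms by blast
  then show ?thesis
    using that unfolding diag_agree_def by blast
qed

lemma Aalg_Bop: "a \<in> Aalg L \<Longrightarrow> a \<in> Bop L"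
  by (erule Aalg_diagE) (simp add: diag_Bop)

lemma Iop_in_Aalg: "Iop L \<in> Aalg L"
proof -
  have "adj L (Tm L tempty) \<circ> Tm L tempty = Iop L"
    unfolding adj_Tm_comp_Tm Iop_eq_diag by (rule diag_cong) simp
  then show ?thesis
    using Aalg_generator[OF tempty_in_L] by simp
qed

lemma zero_in_Aalg: "0 \<in> Aalg L"
proof -
  have "osc 0 (Iop L) = 0"
    by (simp add: osc_def vsc_def fun_eq_iff)
  then show ?thesis
    using Aalg_comp_osc(2)[OF Iop_in_Aalg Iop_in_Aalg, of 0] by simp
qed

lemma follower_indicator_in_Aalg:
  assumes "finite K" and "\<And>p. p \<in> K \<Longrightarrow> m p \<in> L"
  shows "diag L (\<lambda>w. if \<forall>p\<in>K. m p \<star> w \<in> L then 1 else 0) \<in> Aalg L"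
  using assms
proof (induction K rule: finite_induct)
  case empty
  then show ?case
    using Iop_in_Aalg by (simp add: Iop_eq_diag)
next
  case (insert p K)
  have eq: "diag L (\<lambda>w. if m p \<star> w \<in> L then 1 else 0) \<circ> diag L (\<lambda>w. if \<forall>p\<in>K. m p \<star> w \<in> L then 1 else 0)
      = diag L (\<lambda>w. if \<forall>p\<in>insert p K. m p \<star> w \<in> L then 1 else 0)"
    by (subst diag_comp[OF bounded_indicator_comp]) (rule diag_cong, simp)
  have generator: "diag L (\<lambda>w. if m p \<star> w \<in> L then 1 else 0) \<in> Aalg L"
    using Aalg_generator[of "m p" L] insert.prems by (simp add: adj_Tm_comp_Tm)
  have "\<And>q. q \<in> K \<Longrightarrow> m q \<in> L"
    using insert.prems by blast
  then have "diag L (\<lambda>w. if \<forall>p\<in>K. m p \<star> w \<in> L then 1 else 0) \<in> Aalg L"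
    by (rule insert.IH)
  with generator show ?case
    unfolding eq[symmetric] by (rule Aalg_comp_osc(1))
qed

lemma Xi_subset_range_supported: "Xi L d i \<subseteq> range_supported_on_coord L i"
proof (rule Xi_minimal)
  show "{Tm L (delta i k) \<circ> a | k a. k \<in> {1..d} \<and> a \<in> Aalg L \<and> delta i k \<in> L}
      \<subseteq> range_supported_on_coord L i"
  proof
    fix g assume "g \<in> {Tm L (delta i k) \<circ> a | k a. k \<in> {1..d} \<and> a \<in> Aalg L \<and> delta i k \<in> L}"
    then obtain k a where g: "g = Tm L (delta i k) \<circ> a" and a: "a \<in> Aalg L"
      by blast
    have "g \<zeta> w = 0" if "w i = []" for \<zeta> w
    proof -
      have "\<not> (\<forall>j. prefix (delta i k j) (w j))"
        using that prefix_delta_iff by simp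
      then show ?thesis
        by (auto simp: g Tm_def)
    qed
    then show "g \<in> range_supported_on_coord L i"
      unfolding range_supported_on_coord_def g using Bop_comp[OF Tm_Bop Aalg_Bop[OF a]] by blast
  qed
  show "range_supported_on_coord L i \<subseteq> Bop L"
    unfolding range_supported_on_coord_def by blast
qed (simp_all add: range_supported_on_coord_closed norm_closed_range_supported_on_coord)

lemma kerphi_iff:
  assumes "a \<in> Aalg L" and a: "a = diag L c"
  shows "a \<in> kerphi L d i \<longleftrightarrow> (\<forall>w\<in>L. w i \<noteq> [] \<longrightarrow> c w = 0)"
proof
  assume ker: "a \<in> kerphi L d i"
  show "\<forall>w\<in>L. w i \<noteq> [] \<longrightarrow> c w = 0"
  proof (intro ballI impI)
    fix w assume "w \<in> L" and "w i \<noteq> []"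
    then obtain k w' where k: "delta i k \<in> L" and w': "w' \<in> L" and w: "w = delta i k \<star> w'"
      by (rule split_first_letter)
    have "k \<in> {1..d}"
      using letters_in_alphabet[OF k, of i] by (simp add: delta_def)
    then have "Tm L (delta i k) \<circ> Iop L \<in> Xi L d i"
      using k Iop_in_Aalg by (rule Xi_generator)
    then have "a \<circ> (Tm L (delta i k) \<circ> Iop L) = 0"
      using ker unfolding kerphi_def by blast
    then have "a (Tm L (delta i k) (Iop L (basis_vec w'))) w = 0"
      by (simp add: fun_eq_iff)
    also have "Tm L (delta i k) (Iop L (basis_vec w')) = basis_vec w"
      using basis_vec_l2(1)[OF w'] Tm_basis_vec \<open>w \<in> L\<close> by (simp add: Iop_def w)
    finally show "c w = 0"
      using diag_basis_vec[OF \<open>w \<in> L\<close>, of c] by (simp add: a)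
  qed
next
  assume c: "\<forall>w\<in>L. w i \<noteq> [] \<longrightarrow> c w = 0"
  have "(a \<circ> t) \<zeta> w = 0" if t: "t \<in> Xi L d i" for t \<zeta> w
  proof (cases "w \<in> L \<and> w i \<noteq> []")
    case True
    then show ?thesis
      using c by (simp add: a diag_def)
  next
    case False
    then show ?thesis
      using Xi_subset_range_supported t l2_vanishes[of "t \<zeta>" L w]
      by (auto simp: a diag_def range_supported_on_coord_def)
  qed
  then show "a \<in> kerphi L d i"
    unfolding kerphi_def using assms(1) by (simp add: fun_eq_iff)
qed

section \<open>Elements of the kernels and the projection onto the empty word\<close>

lemma zero_in_kerphi: "0 \<in> kerphi L d i"
  unfolding kerphi_def using zero_in_Aalg by (simp add: fun_eq_iff)

lemma Qempty_neq_zero: "Qempty L \<noteq> 0"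
proof
  assume "Qempty L = 0"
  then have "diag L (\<lambda>w. if w = tempty then 1 else 0) = diag L (\<lambda>_. 0)"
    by (simp add: Qempty_eq_diag)
  from diag_eqD[OF this tempty_in_L] show False
    by simp
qed

lemma QG_empty: "QG L d {} = Iop L"
  by (simp add: QG_def)

lemma kerphi_comp_QG_eq_scaled_Qempty:
  assumes "F \<noteq> {}" and a: "a \<in> (\<Inter>i\<in>F. kerphi L d i)"
  obtains z where "a \<circ> QG L d ({1..N} - F) = osc z (Qempty L)"
proof -
  obtain i where "i \<in> F"
    using \<open>F \<noteq> {}\<close> by blast
  then have "a \<in> Aalg L"
    using a unfolding kerphi_def by blast
  then obtain c where "bounded (c ` L)" and ac: "a = diag L c"
    by (rule Aalg_diagE)
  have vanish: "c w = 0" if "w \<in> L" "i \<in> F" "w i \<noteq> []" for w i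
    using kerphi_iff[OF \<open>a \<in> Aalg L\<close> ac] a that by blast
  have "a \<circ> QG L d ({1..N} - F) = diag L (\<lambda>w. c w * (if \<forall>i\<in>{1..N} - F. w i = [] then 1 else 0))"
    unfolding ac QG_eq_diag[OF finite_Diff[OF finite_atLeastAtMost]]
    by (rule diag_comp[OF bounded_indicator_comp])
  also have "\<dots> = diag L (\<lambda>w. c tempty * (if w = tempty then 1 else 0))"
  proof (rule diag_cong)
    fix w assume w: "w \<in> L"
    show "c w * (if \<forall>i\<in>{1..N} - F. w i = [] then 1 else 0) = c tempty * (if w = tempty then 1 else 0)"
    proof (cases "w = tempty \<or> (\<exists>i\<in>{1..N} - F. w i \<noteq> [])")
      case False
      then obtain i where "i \<in> F" and "w i \<noteq> []"
        using eq_tempty_if_coords_empty[OF w] by blast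
      then show ?thesis
        using False vanish[OF w] by auto
    qed auto
  qed
  also have "\<dots> = osc (c tempty) (Qempty L)"
    by (simp add: Qempty_eq_diag osc_diag)
  finally show ?thesis
    by (rule that)
qed

lemma projection_if_kerphi_comp_QG_nonzero:
  assumes "F \<noteq> {}" and a: "a \<in> (\<Inter>i\<in>F. kerphi L d i)"
    and nonzero: "a \<circ> QG L d ({1..N} - F) \<noteq> 0"
  shows "\<exists>b\<in>Aalg L. b \<circ> QG L d ({1..N} - F) = Qempty L"
proof -
  obtain z where z: "a \<circ> QG L d ({1..N} - F) = osc z (Qempty L)"
    using kerphi_comp_QG_eq_scaled_Qempty[OF assms(1,2)] .
  have "z \<noteq> 0"
    using nonzero z by auto
  have "a \<in> Aalg L"
    using a assms(1) unfolding kerphi_def by blast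
  then have "osc (1 / z) a \<in> Aalg L"
    by (rule Aalg_comp_osc(2)[OF _ \<open>a \<in> Aalg L\<close>])
  moreover have "osc (1 / z) a \<circ> QG L d ({1..N} - F) = Qempty L"
    using \<open>z \<noteq> 0\<close> unfolding osc_comp z osc_osc by simp
  ultimately show ?thesis
    by blast
qed

lemma unextendable_if_projection:
  assumes "a \<in> Aalg L" and a: "a \<circ> QG L d ({1..N} - F) = Qempty L"
    and "i \<in> F" and delta: "delta i k \<in> L"
  shows "\<exists>\<mu>\<in>L. \<mu> \<star> delta i k \<notin> L"
proof (rule ccontr)
  assume "\<not> ?thesis"
  then have "\<mu> \<star> tempty \<in> L \<longleftrightarrow> \<mu> \<star> delta i k \<in> L" if "\<mu> \<in> L" for \<mu>
    using that by simp
  then have "a \<in> diag_agree L tempty (delta i k)"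
    using Aalg_subset_diag_agree[OF tempty_in_L delta] \<open>a \<in> Aalg L\<close> by blast
  then obtain c where ac: "a = diag L c" and "c tempty = c (delta i k)"
    unfolding diag_agree_def by blast
  let ?q = "\<lambda>w. if \<forall>j\<in>{1..N} - F. w j = [] then 1 else 0 :: complex"
  have "a \<circ> QG L d ({1..N} - F) = diag L (\<lambda>w. c w * ?q w)"
    unfolding ac QG_eq_diag[OF finite_Diff[OF finite_atLeastAtMost]]
    by (rule diag_comp[OF bounded_indicator_comp])
  then have eq: "diag L (\<lambda>w. c w * ?q w) = diag L (\<lambda>w. if w = tempty then 1 else 0)"
    using a by (simp add: Qempty_eq_diag)
  have "c tempty * ?q tempty = 1"
    using diag_eqD[OF eq tempty_in_L] by simp
  moreover have "c (delta i k) * ?q (delta i k) = 0"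
    using diag_eqD[OF eq delta] delta_neq_tempty by simp
  moreover have "?q (delta i k) = 1"
    using \<open>i \<in> F\<close> by (auto simp: delta_def)
  ultimately show False
    using \<open>c tempty = c (delta i k)\<close> by simp
qed

lemma follower_indicator_in_kerphi:
  assumes "finite K" and m: "\<And>p. p \<in> K \<Longrightarrow> m p \<in> L"
    and blocked: "\<And>k. delta i k \<in> L \<Longrightarrow> \<exists>p\<in>K. m p \<star> delta i k \<notin> L"
  shows "diag L (\<lambda>w. if \<forall>p\<in>K. m p \<star> w \<in> L then 1 else 0) \<in> kerphi L d i"
proof -
  have "\<forall>w\<in>L. w i \<noteq> [] \<longrightarrow> (if \<forall>p\<in>K. m p \<star> w \<in> L then 1 else 0) = 0"
  proof (intro ballI impI)
    fix w assume "w \<in> L" and "w i \<noteq> []"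
    obtain k w' where k: "delta i k \<in> L" and w: "w = delta i k \<star> w'"
      using \<open>w \<in> L\<close> \<open>w i \<noteq> []\<close> by (rule split_first_letter)
    then obtain p where "p \<in> K" and p: "m p \<star> delta i k \<notin> L"
      using blocked by blast
    have "m p \<star> w \<notin> L"
    proof
      assume "m p \<star> w \<in> L"
      then have "m p \<star> delta i k \<in> L"
        unfolding w tcat_assoc[symmetric] by (rule prefix_closed)
      with p show False ..
    qed
    with \<open>p \<in> K\<close> show "(if \<forall>p\<in>K. m p \<star> w \<in> L then 1 else 0) = 0"
      by auto
  qed
  then show ?thesis
    by (subst kerphi_iff[OF follower_indicator_in_Aalg[OF assms(1,2)] refl])
qed

lemma kerphi_comp_QG_nonzero_if_unextendable:
  assumes F: "F \<subseteq> {1..N}"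
    and unext: "\<forall>i\<in>F. \<forall>k\<in>{1..d}. delta i k \<in> L \<longrightarrow> (\<exists>\<mu>\<in>L. \<mu> \<star> delta i k \<notin> L)"
  shows "\<exists>a. a \<in> (\<Inter>i\<in>F. kerphi L d i) \<and> a \<circ> QG L d ({1..N} - F) \<noteq> 0"
proof -
  define K where "K = {(i, k) \<in> F \<times> {1..d}. delta i k \<in> L}"
  have "finite K"
    using finite_subset[OF F] unfolding K_def by (auto intro: finite_subset[of _ "F \<times> {1..d}"])
  have "\<forall>p\<in>K. \<exists>\<mu>. \<mu> \<in> L \<and> \<mu> \<star> delta (fst p) (snd p) \<notin> L"
    using unext unfolding K_def by fastforce
  then obtain m where m: "\<And>p. p \<in> K \<Longrightarrow> m p \<in> L \<and> m p \<star> delta (fst p) (snd p) \<notin> L"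
    using bchoice[of K "\<lambda>p \<mu>. \<mu> \<in> L \<and> \<mu> \<star> delta (fst p) (snd p) \<notin> L"] by blast
  define c where "c = (\<lambda>w. if \<forall>p\<in>K. m p \<star> w \<in> L then 1 else 0 :: complex)"
  have "diag L c \<in> kerphi L d i" if "i \<in> F" for i
    unfolding c_def
  proof (rule follower_indicator_in_kerphi[OF \<open>finite K\<close>])
    show "\<exists>p\<in>K. m p \<star> delta i k \<notin> L" if "delta i k \<in> L" for k
    proof -
      have "(i, k) \<in> K"
        using \<open>i \<in> F\<close> that letters_in_alphabet[OF that, of i] unfolding K_def by (simp add: delta_def)
      then show ?thesis
        using m by fastforce
    qed
  qed (use m in blast)
  moreover have "diag L c \<circ> QG L d ({1..N} - F) \<noteq> 0"
  proof
    assume "diag L c \<circ> QG L d ({1..N} - F) = 0"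
    then have "diag L (\<lambda>w. c w * (if \<forall>j\<in>{1..N} - F. w j = [] then 1 else 0)) = diag L (\<lambda>_. 0)"
      unfolding QG_eq_diag[OF finite_Diff[OF finite_atLeastAtMost]] diag_comp[OF bounded_indicator_comp]
      by simp
    from diag_eqD[OF this tempty_in_L] show False
      using m by (simp add: c_def)
  qed
  ultimately show ?thesis
    by blast
qed

lemma projection_QG_empty_iff: "(\<exists>a\<in>Aalg L. a \<circ> QG L d {} = Qempty L) \<longleftrightarrow> Qempty L \<in> Aalg L"
  using comp_Iop[OF Aalg_Bop] by (auto simp: QG_empty)

lemma kerphi_all_eq_scaled_Qempty:
  assumes "0 < N" and Q: "Qempty L \<in> Aalg L"
  shows "(\<Inter>i\<in>{1..N}. kerphi L d i) = {osc c (Qempty L) | c. True}"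
proof (intro equalityI subsetI INT_I)
  fix a assume a: "a \<in> (\<Inter>i\<in>{1..N}. kerphi L d i)"
  have "{1..N} \<noteq> {}"
    using \<open>0 < N\<close> by simp
  then obtain z where z: "a \<circ> QG L d ({1..N} - {1..N}) = osc z (Qempty L)"
    using kerphi_comp_QG_eq_scaled_Qempty[OF _ a] by blast
  have "a \<in> Aalg L"
    using a \<open>{1..N} \<noteq> {}\<close> unfolding kerphi_def by blast
  then have "a = osc z (Qempty L)"
    using z by (simp add: QG_empty comp_Iop[OF Aalg_Bop])
  then show "a \<in> {osc c (Qempty L) | c. True}"
    by blast
next
  fix a i assume "a \<in> {osc c (Qempty L) | c. True}"
  then obtain c where a: "a = osc c (Qempty L)"
    by blast
  have "a \<in> Aalg L"
    unfolding a using Q Q by (rule Aalg_comp_osc(2))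
  moreover have "a = diag L (\<lambda>w. c * (if w = tempty then 1 else 0))"
    by (simp add: a Qempty_eq_diag osc_diag)
  ultimately show "a \<in> kerphi L d i"
    by (subst kerphi_iff) auto
qed

lemma Qempty_in_Aalg_if_kerphi_all_eq:
  assumes "0 < N" and "(\<Inter>i\<in>{1..N}. kerphi L d i) = {osc c (Qempty L) | c. True}"
  shows "Qempty L \<in> Aalg L"
proof -
  have "Qempty L \<in> {osc c (Qempty L) | c. True}"
    using osc_one by (metis (mono_tags, lifting) mem_Collect_eq)
  moreover have "1 \<in> {1..N}"
    using \<open>0 < N\<close> by simp
  ultimately have "Qempty L \<in> kerphi L d 1"
    using assms(2) by (metis INT_D)
  then show ?thesis
    unfolding kerphi_def by simp
qed

lemma kerphi_all_neq_zero:
  assumes "0 < N" and "Qempty L \<in> Aalg L"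
  shows "(\<Inter>i\<in>{1..N}. kerphi L d i) \<noteq> {0}"
proof
  assume "(\<Inter>i\<in>{1..N}. kerphi L d i) = {0}"
  then have "{osc c (Qempty L) | c. True} = {0}"
    using kerphi_all_eq_scaled_Qempty[OF assms] by simp
  then have "osc 1 (Qempty L) = 0"
    by (metis (mono_tags, lifting) mem_Collect_eq singletonD)
  then show False
    using Qempty_neq_zero by simp
qed

lemma kerphi_comp_QG_empty_nonzero:
  assumes "0 < N" and "(\<Inter>i\<in>{1..N}. kerphi L d i) \<noteq> {0}"
  shows "\<exists>a. a \<in> (\<Inter>i\<in>{1..N}. kerphi L d i) \<and> a \<circ> QG L d {} \<noteq> 0"
proof -
  obtain a where a: "a \<in> (\<Inter>i\<in>{1..N}. kerphi L d i)" and "a \<noteq> 0"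
    using assms(2) zero_in_kerphi by blast
  have "1 \<in> {1..N}"
    using \<open>0 < N\<close> by simp
  with a have "a \<in> Aalg L"
    unfolding kerphi_def by blast
  then show ?thesis
    using a \<open>a \<noteq> 0\<close> by (auto simp: QG_empty comp_Iop[OF Aalg_Bop])
qed

end

theorem proposition9p17:
  fixes d N :: nat and L :: "tup set" and F :: "nat set"
  assumes "factorial_language d N L"
    and "F \<noteq> {}" and "F \<subseteq> {1..N}"
  defines "Fc \<equiv> {1..N} - F"
  shows "((\<exists>a. a \<in> (\<Inter>i\<in>F. kerphi L d i) \<and> a \<circ> QG L d Fc \<noteq> 0)
            \<longleftrightarrow> (\<exists>a\<in>Aalg L. a \<circ> QG L d Fc = Qempty L))
       \<and> ((\<exists>a\<in>Aalg L. a \<circ> QG L d Fc = Qempty L)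
            \<longleftrightarrow> (\<forall>i\<in>F. \<forall>k\<in>{1..d}. delta i k \<in> L \<longrightarrow> (\<exists>\<mu>\<in>L. \<mu> \<star> delta i k \<notin> L)))
       \<and> (F = {1..N} \<longrightarrow>
            (((\<forall>i\<in>F. \<forall>k\<in>{1..d}. delta i k \<in> L \<longrightarrow> (\<exists>\<mu>\<in>L. \<mu> \<star> delta i k \<notin> L))
               \<longleftrightarrow> (\<Inter>i\<in>{1..N}. kerphi L d i) = {osc c (Qempty L) | c. True})
           \<and> ((\<forall>i\<in>F. \<forall>k\<in>{1..d}. delta i k \<in> L \<longrightarrow> (\<exists>\<mu>\<in>L. \<mu> \<star> delta i k \<notin> L))
               \<longleftrightarrow> (\<Inter>i\<in>{1..N}. kerphi L d i) \<noteq> {0})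
           \<and> ((\<forall>i\<in>F. \<forall>k\<in>{1..d}. delta i k \<in> L \<longrightarrow> (\<exists>\<mu>\<in>L. \<mu> \<star> delta i k \<notin> L))
               \<longleftrightarrow> Qempty L \<in> Aalg L)))"
proof -
  have "0 < N"
    using assms(2,3) by fastforce
  interpret factorial_lang d N L
    by (rule factorial_lang.intro[OF assms(1)])
  interpret nonempty_factorial_lang d N L
    by unfold_locales (rule tempty_in_L_if_pos[OF \<open>0 < N\<close>])
  let ?i = "\<exists>a. a \<in> (\<Inter>i\<in>F. kerphi L d i) \<and> a \<circ> QG L d Fc \<noteq> 0"
  let ?ii = "\<exists>a\<in>Aalg L. a \<circ> QG L d Fc = Qempty L"
  let ?iii = "\<forall>i\<in>F. \<forall>k\<in>{1..d}. delta i k \<in> L \<longrightarrow> (\<exists>\<mu>\<in>L. \<mu> \<star> delta i k \<notin> L)"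
  have i_ii: "?i \<Longrightarrow> ?ii"
    using projection_if_kerphi_comp_QG_nonzero assms(2) unfolding Fc_def by blast
  have ii_iii: "?ii \<Longrightarrow> ?iii"
    using unextendable_if_projection unfolding Fc_def by blast
  have iii_i: "?iii \<Longrightarrow> ?i"
    using kerphi_comp_QG_nonzero_if_unextendable assms(3) unfolding Fc_def by blast
  let ?K = "\<Inter>i\<in>{1..N}. kerphi L d i"
  have "(?iii \<longleftrightarrow> ?K = {osc c (Qempty L) | c. True}) \<and> (?iii \<longleftrightarrow> ?K \<noteq> {0})
      \<and> (?iii \<longleftrightarrow> Qempty L \<in> Aalg L)" if F: "F = {1..N}"
  proof -
    have Fc: "Fc = {}"
      using F by (simp add: Fc_def)
    then have "?ii \<longleftrightarrow> Qempty L \<in> Aalg L"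
      using projection_QG_empty_iff by simp
    moreover have "?K \<noteq> {0} \<Longrightarrow> ?i"
      using kerphi_comp_QG_empty_nonzero[OF \<open>0 < N\<close>] F Fc by simp
    ultimately show ?thesis
      using i_ii ii_iii iii_i kerphi_all_eq_scaled_Qempty[OF \<open>0 < N\<close>]
        Qempty_in_Aalg_if_kerphi_all_eq[OF \<open>0 < N\<close>] kerphi_all_neq_zero[OF \<open>0 < N\<close>] by argo
  qed
  with i_ii ii_iii iii_i show ?thesis
    by argo
qed

end
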